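(* Let $\mathcal V_{r_p}=\{\bm v_1,\ldots,\bm v_{r_p}\}\subset\mathbb R^q$ be the UD skeleton, let $\mathcal K$ be a reproducing kernel on $[0,1]^q\times[0,1]^q$, and let $f:[0,1]^q\to\mathbb R$ have $V_2(f,\mathcal K)<\infty$ and be such that $\varphi_f(\bm z)=f(T_{\bm Z}(\bm z))$ is Lipschitz on $\mathcal Z\cup\mathcal V_{r_p}$ with constant $L_f$. Then for $\phi_f(\bm x)=f(\mathcal T(\bm x))$, \[ \left|\int\phi_f\,dP_{\mathcal S_1,\bm X}-\int\phi_f\,dP_{\mathcal S_0,\bm X}\right|\le L_f\bigl(\delta_1^{(\mathrm{rot})}+\delta_0^{(\mathrm{rot})}\bigr). \]
   Context: Data: $(Y_i,W_i,\bm X_i)$, $i=1,\ldots,n$, with $W_i\in\{0,1\}$, $\bm X_i\in\mathbb R^p$; both arms nonempty. Let $\bar{\bm X}=n^{-1}\sum_i\bm X_i$, $\widehat{\bm D}$ the diagonal matrix of (positive) sample standard deviations, $\widetilde{\bm X}_i=\widehat{\bm D}^{-1}(\bm X_i-\bar{\bm X})$, $\widetilde{\bm X}=\bm U\bm\Sigma\bm V^\top$ the SVD (singular values decreasing) of the matrix with rows $\widetilde{\bm X}_i^\top$; for chosen $q\le p$, $\bm V_q$ = first $q$ columns of $\bm V$, $\Pi_q(\bm x)=\bm V_q^\top\widehat{\bm D}^{-1}(\bm x-\bar{\bm X})$, $\bm Z_i=\Pi_q(\bm X_i)$, $\mathcal Z=\{\bm Z_i\}_{i=1}^n$. $\widehat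 F_{Z^{(d)}}$ is the empirical CDF of $\{Z_i^{(d)}\}_i$, $T_{\bm Z}(\bm z)=(\widehat F_{Z^{(1)}}(z^{(1)}),\ldots,\widehat F_{Z^{(q)}}(z^{(q)}))^\top$, $\mathcal T(\bm x)=T_{\bm Z}(\Pi_q(\bm x))$. The UD skeleton $\mathcal V_{r_p}=\{\bm v_j\}\subset\mathbb R^q$ has $\bm v_j=(\widehat F^{-1}_{Z^{(1)}}(u_{j1}),\ldots,\widehat F^{-1}_{Z^{(q)}}(u_{jq}))^\top$ for a design $\{\bm u_j\}\subset[0,1]^q$. For $g\in\{0,1\}$, $i_j^g\in\arg\min_{i:W_i=g}\|\bm Z_i-\bm v_j\|_2$, $\mathcal S_g=\{i_j^g\}_{j=1}^{r_p}$, $\delta_g^{(\mathrm{rot})}=\max_j\|\bm Z_{i_j^g}-\bm v_j\|_2$, and $P_{\mathcal S_g,\bm X}=r_p^{-1}\sum_{j=1}^{r_p}\delta_{\bm X_{i_j^g}}$. $V_2(f,\mathcal K)$ is the generalized (Hickernell) variation of $f$ with respect to $\mathcal K$ (the quantity appearing in the Koksma–Hlawka inequality $|n^{-1}\sum_i f(T_{\bm Z}(\bm Z_i))-m^{-1}\sum_k f(T_{\bm Z}(\bm\xi_k))|\le D(\{\bm\xi_k\};\mathcal Z,\mathcal K)V_2(f,\mathcal K)$, with $D$ the generalized empirical $F$-discrepancy). *)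

theory Defs
  imports Complex_Main
begin

text \<open>Vectors in R^k are represented as functions nat => real, only the
coordinates below k being meaningful. Data matrix X : nat => nat => real,
X i k = k-th covariate of unit i (i < n, k < p).\<close>

definition smean :: "nat \<Rightarrow> (nat \<Rightarrow> nat \<Rightarrow> real) \<Rightarrow> nat \<Rightarrow> real" where
  "smean n X k = (\<Sum>i<n. X i k) / real n"

definition ssd :: "nat \<Rightarrow> (nat \<Rightarrow> nat \<Rightarrow> real) \<Rightarrow> nat \<Rightarrow> real" where
  "ssd n X k = sqrt ((\<Sum>i<n. (X i k - smean n X k)^2) / (real n - 1))"

definition standardize :: "nat \<Rightarrow> (nat \<Rightarrow> nat \<Rightarrow> real) \<Rightarrow> nat \<Rightarrow> nat \<Rightarrow> real" where
  "standardize n X i k = (X i k - smean n X k) / ssd n X k"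

definition is_svd :: "nat \<Rightarrow> nat \<Rightarrow> (nat \<Rightarrow> nat \<Rightarrow> real) \<Rightarrow> (nat \<Rightarrow> nat \<Rightarrow> real)
    \<Rightarrow> (nat \<Rightarrow> real) \<Rightarrow> (nat \<Rightarrow> nat \<Rightarrow> real) \<Rightarrow> bool" where
  "is_svd n p A U s V \<longleftrightarrow>
     (\<forall>a<n. \<forall>b<n. (\<Sum>i<n. U i a * U i b) = (if a = b then 1 else 0)) \<and>
     (\<forall>a<p. \<forall>b<p. (\<Sum>k<p. V k a * V k b) = (if a = b then 1 else 0)) \<and>
     (\<forall>l<min n p. 0 \<le> s l) \<and>
     (\<forall>l l'. l \<le> l' \<and> l' < min n p \<longrightarrow> s l' \<le> s l) \<and>
     (\<forall>i<n. \<forall>k<p. A i k = (\<Sum>l<min n p. U i l * s l * V k l))"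

definition proj :: "nat \<Rightarrow> nat \<Rightarrow> (nat \<Rightarrow> nat \<Rightarrow> real) \<Rightarrow> (nat \<Rightarrow> nat \<Rightarrow> real) \<Rightarrow> nat
    \<Rightarrow> (nat \<Rightarrow> real) \<Rightarrow> (nat \<Rightarrow> real)" where
  "proj n p X V q x = (\<lambda>d. if d < q then (\<Sum>k<p. V k d * ((x k - smean n X k) / ssd n X k)) else 0)"

definition ecdf :: "nat \<Rightarrow> (nat \<Rightarrow> nat \<Rightarrow> real) \<Rightarrow> nat \<Rightarrow> real \<Rightarrow> real" where
  "ecdf n Z d t = real (card {i. i < n \<and> Z i d \<le> t}) / real n"

definition Tmap :: "nat \<Rightarrow> nat \<Rightarrow> (nat \<Rightarrow> nat \<Rightarrow> real) \<Rightarrow> (nat \<Rightarrow> real) \<Rightarrow> (nat \<Rightarrow> real)" where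
  "Tmap n q Z z = (\<lambda>d. if d < q then ecdf n Z d (z d) else 0)"

definition ecdf_inv :: "nat \<Rightarrow> (nat \<Rightarrow> nat \<Rightarrow> real) \<Rightarrow> nat \<Rightarrow> real \<Rightarrow> real" where
  "ecdf_inv n Z d u = Min {Z i d | i. i < n \<and> u \<le> ecdf n Z d (Z i d)}"

definition skeleton :: "nat \<Rightarrow> nat \<Rightarrow> (nat \<Rightarrow> nat \<Rightarrow> real) \<Rightarrow> (nat \<Rightarrow> nat \<Rightarrow> real) \<Rightarrow> nat \<Rightarrow> (nat \<Rightarrow> real)" where
  "skeleton n q Z u j = (\<lambda>d. if d < q then ecdf_inv n Z d (u j d) else 0)"

definition distq :: "nat \<Rightarrow> (nat \<Rightarrow> real) \<Rightarrow> (nat \<Rightarrow> real) \<Rightarrow> real" where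
  "distq q a b = sqrt (\<Sum>d<q. (a d - b d)^2)"

end

theory Submission
  imports Defs
begin

text \<open>Each matched pair is compared through its skeleton point v_j: by the triangle
  inequality and the Lipschitz property,
  |phi(Z_(i1 j)) - phi(Z_(i0 j))| \<le> L (|Z_(i1 j) - v_j| + |Z_(i0 j) - v_j|) \<le> L (delta_1 + delta_0),
  and averaging over j gives the bound.\<close>

lemma distq_nonneg: "0 \<le> distq q a b"
  unfolding distq_def by (simp add: sum_nonneg)

text \<open>The theorem does not assume L \<ge> 0; for L < 0 the hypothesis forces A \<subseteq> {0}.\<close>
lemma mult_le_mult_Max:
  fixes L :: real
  assumes "finite A" "x \<in> A" "\<forall>y\<in>A. 0 \<le> y \<and> 0 \<le> L * y"
  shows "L * x \<le> L * Max A"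
proof (cases "0 \<le> L")
  case True
  then show ?thesis using assms by (simp add: mult_left_mono)
next
  case False
  then have zero: "y = 0" if "y \<in> A" for y
    using assms(3) that by (meson antisym mult_less_0_iff not_le)
  have "Max A \<in> A" using assms(1,2) by (intro Max_in) auto
  then show ?thesis using zero[of x] zero[of "Max A"] assms(2) by simp
qed

lemma abs_mean_diff_le:
  fixes a b :: "nat \<Rightarrow> real"
  assumes "1 \<le> r" "\<forall>j<r. \<bar>a j - b j\<bar> \<le> c"
  shows "\<bar>(\<Sum>j<r. a j) / real r - (\<Sum>j<r. b j) / real r\<bar> \<le> c"
proof -
  have "\<bar>(\<Sum>j<r. a j) / real r - (\<Sum>j<r. b j) / real r\<bar> = \<bar>\<Sum>j<r. a j - b j\<bar> / real r"
    by (simp add: sum_subtractf diff_divide_distrib[symmetric])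
  also have "\<dots> \<le> (\<Sum>j<r. \<bar>a j - b j\<bar>) / real r"
    by (intro divide_right_mono sum_abs) simp
  also have "\<dots> \<le> (\<Sum>j<r. c) / real r"
    using assms(2) by (intro divide_right_mono sum_mono) auto
  also have "\<dots> = c" using assms(1) by simp
  finally show ?thesis .
qed

lemma lipschitz_mean_matched_diff_le:
  fixes \<phi> :: "'a \<Rightarrow> real" and d :: "'a \<Rightarrow> 'a \<Rightarrow> real"
    and z\<^sub>1 z\<^sub>0 v :: "nat \<Rightarrow> 'a"
  assumes r: "1 \<le> r"
    and d_nonneg: "\<And>a b. 0 \<le> d a b"
    and mem: "\<forall>j<r. z\<^sub>1 j \<in> S \<and> z\<^sub>0 j \<in> S \<and> v j \<in> S"
    and lipschitz: "\<forall>a\<in>S. \<forall>b\<in>S. \<bar>\<phi> a - \<phi> b\<bar> \<le> L * d a b"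
  defines "\<delta>\<^sub>1 \<equiv> Max ((\<lambda>j. d (z\<^sub>1 j) (v j)) ` {..<r})"
    and "\<delta>\<^sub>0 \<equiv> Max ((\<lambda>j. d (z\<^sub>0 j) (v j)) ` {..<r})"
  shows "\<bar>(\<Sum>j<r. \<phi> (z\<^sub>1 j)) / real r - (\<Sum>j<r. \<phi> (z\<^sub>0 j)) / real r\<bar> \<le> L * (\<delta>\<^sub>1 + \<delta>\<^sub>0)"
proof (rule abs_mean_diff_le[OF r], intro allI impI)
  have to_skeleton: "\<bar>\<phi> (z j) - \<phi> (v j)\<bar> \<le> L * Max ((\<lambda>j. d (z j) (v j)) ` {..<r})"
    if "j < r" and "\<forall>j<r. z j \<in> S" for z j
  proof -
    have "\<forall>y\<in>(\<lambda>j. d (z j) (v j)) ` {..<r}. 0 \<le> y \<and> 0 \<le> L * y"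
      using lipschitz mem that(2) d_nonneg by fastforce
    then have "L * d (z j) (v j) \<le> L * Max ((\<lambda>j. d (z j) (v j)) ` {..<r})"
      using \<open>j < r\<close> by (intro mult_le_mult_Max) auto
    moreover have "\<bar>\<phi> (z j) - \<phi> (v j)\<bar> \<le> L * d (z j) (v j)"
      using lipschitz mem that by blast
    ultimately show ?thesis by linarith
  qed
  fix j assume "j < r"
  then show "\<bar>\<phi> (z\<^sub>1 j) - \<phi> (z\<^sub>0 j)\<bar> \<le> L * (\<delta>\<^sub>1 + \<delta>\<^sub>0)"
    using to_skeleton[of j z\<^sub>1] to_skeleton[of j z\<^sub>0] mem
    unfolding \<delta>\<^sub>1_def \<delta>\<^sub>0_def by (simp add: distrib_left)
qed

theorem theorem2:
  fixes n p q r :: nat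
    and X :: "nat \<Rightarrow> nat \<Rightarrow> real" and W :: "nat \<Rightarrow> bool"
    and U V :: "nat \<Rightarrow> nat \<Rightarrow> real" and s :: "nat \<Rightarrow> real"
    and u :: "nat \<Rightarrow> nat \<Rightarrow> real"
    and f :: "(nat \<Rightarrow> real) \<Rightarrow> real" and L :: real
    and sel :: "bool \<Rightarrow> nat \<Rightarrow> nat"
    and Z :: "nat \<Rightarrow> nat \<Rightarrow> real" and v :: "nat \<Rightarrow> nat \<Rightarrow> real"
    and \<delta> :: "bool \<Rightarrow> real"
  assumes treated: "\<exists>i<n. W i" and control: "\<exists>i<n. \<not> W i"
    and sd_pos: "\<forall>k<p. ssd n X k > 0"
    and svd: "is_svd n p (standardize n X) U s V"
    and q: "1 \<le> q" "q \<le> p"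
    and r: "1 \<le> r"
    and design: "\<forall>j<r. \<forall>d<q. 0 \<le> u j d \<and> u j d \<le> 1"
    and Z_def: "Z = (\<lambda>i. proj n p X V q (X i))"
    and v_def: "v = skeleton n q Z u"
    and sel: "\<forall>g j. j < r \<longrightarrow> sel g j < n \<and> W (sel g j) = g \<and>
               (\<forall>i<n. W i = g \<longrightarrow> distq q (Z (sel g j)) (v j) \<le> distq q (Z i) (v j))"
    and \<delta>_def: "\<delta> = (\<lambda>g. Max ((\<lambda>j. distq q (Z (sel g j)) (v j)) ` {..<r}))"
    and lipschitz: "\<forall>a\<in>Z ` {..<n} \<union> v ` {..<r}. \<forall>b\<in>Z ` {..<n} \<union> v ` {..<r}.
               \<bar>f (Tmap n q Z a) - f (Tmap n q Z b)\<bar> \<le> L * distq q a b"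
  shows "\<bar>(\<Sum>j<r. f (Tmap n q Z (proj n p X V q (X (sel True j))))) / real r
          - (\<Sum>j<r. f (Tmap n q Z (proj n p X V q (X (sel False j))))) / real r\<bar>
         \<le> L * (\<delta> True + \<delta> False)"
proof -
  have "\<forall>j<r. Z (sel True j) \<in> Z ` {..<n} \<union> v ` {..<r} \<and>
      Z (sel False j) \<in> Z ` {..<n} \<union> v ` {..<r} \<and> v j \<in> Z ` {..<n} \<union> v ` {..<r}"
    using sel by blast
  from lipschitz_mean_matched_diff_le[OF r distq_nonneg this lipschitz]
  show ?thesis unfolding \<delta>_def by (simp add: Z_def)
qed

end
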